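(* Let $\sigma^2>0$, $P_{\mathrm{tran}}>0$, $\theta_{\mathrm I}>0$, $\rho_{\mathrm{cont}}>0$, $\rho_{\mathrm{out}}\in(0,1)$, $N=\tau f_{\mathrm s}>0$ and $\gamma\ge0$, and let $$a_1=\frac{N(1+\gamma)^2}{2+4\gamma},\qquad b_1=\frac{\sigma^2(2+4\gamma)}{N(1+\gamma)}.$$ Assume $b_1P^{-1}(1-\rho_{\mathrm{out}},a_1)>\sigma^2$ and set $P^{*}=\dfrac{\theta_{\mathrm I}P_{\mathrm{tran}}}{b_1P^{-1}(1-\rho_{\mathrm{out}},a_1)-\sigma^2}$. Then the transmit power constraint $P^{*}\le\rho_{\mathrm{cont}}$ holds if and only if $$\rho_{\mathrm{out}}\le 1-P\!\left(a_1,\ \frac{1}{b_1}\Big(\frac{\theta_{\mathrm I}P_{\mathrm{tran}}}{\rho_{\mathrm{cont}}}+\sigma^2\Big)\right).$$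
   Context: $P(a,x)=\frac{1}{\Gamma(a)}\int_0^x t^{a-1}e^{-t}\,dt$ is the regularized lower incomplete Gamma function and $P^{-1}(y,a)$ is its inverse in the second argument ($P(a,P^{-1}(y,a))=y$ for $y\in(0,1)$). In the paper, $P^{*}$ is the power obtained from an outage constraint on the interference at the primary receiver when the received-power estimate is modeled as Gamma with shape $a_1$ and scale $b_1$; the set of $\gamma$ (for given $\tau$) satisfying the displayed inequality is called the operating regime, and equality defines its boundary $\gamma^*$. *)

theory Defs
  imports "HOL-Analysis.Analysis"
begin

definition reg_lower_gamma :: "real \<Rightarrow> real \<Rightarrow> real" where
  "reg_lower_gamma a x = (1 / Gamma a) * integral {0..x} (\<lambda>t. t powr (a - 1) * exp (- t))"

text \<open>Inverse in the second argument: the x >= 0 with P(a,x) = y (unique for y in (0,1), a > 0).\<close>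
definition inv_reg_lower_gamma :: "real \<Rightarrow> real \<Rightarrow> real" where
  "inv_reg_lower_gamma y a = (THE x. 0 \<le> x \<and> reg_lower_gamma a x = y)"

end

theory Submission imports Defs begin

text \<open>For a > 0 the map x \<mapsto> P(a,x) is continuous and strictly increasing on [0,\<infinity>)
  with limit 1, so P^-1(y,a) is the unique preimage of y. Clearing the positive denominator,
  P* \<le> \<rho>_cont becomes z \<le> x0, where x0 = P^-1(1 - \<rho>_out, a1) and z is the argument of P
  on the right-hand side; strict monotonicity turns this into P(a1,z) \<le> P(a1,x0) = 1 - \<rho>_out.\<close>

definition gamma_integrand :: "real \<Rightarrow> real \<Rightarrow> real" where
  "gamma_integrand a t = t powr (a - 1) * exp (- t)"

lemma gamma_integrand_nonneg: "0 \<le> gamma_integrand a t"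
  by (simp add: gamma_integrand_def)

lemma reg_lower_gamma_eq_integral:
  "reg_lower_gamma a x = integral {0..x} (gamma_integrand a) / Gamma a"
  by (simp add: reg_lower_gamma_def gamma_integrand_def[abs_def])

lemma gamma_integrand_has_integral:
  assumes "a > 0"
  shows "(gamma_integrand a has_integral Gamma a) {0..}"
proof -
  have "(\<lambda>t. t powr (a - 1) / exp t) = gamma_integrand a"
    by (auto simp: gamma_integrand_def exp_minus field_simps)
  then show ?thesis
    using Gamma_integral_real[OF assms] by simp
qed

lemma gamma_integrand_integrable_on:
  assumes "a > 0" "0 \<le> x"
  shows "gamma_integrand a integrable_on {0..x}"
  using integrable_on_subinterval[of "gamma_integrand a" "{0..}" 0 x]
    gamma_integrand_has_integral[OF assms(1)] assms(2)
  by (auto simp: integrable_on_def)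

lemma gamma_integrand_lower_bound:
  assumes "0 < m" "m \<le> t" "t \<le> y"
  shows "min (m powr (a - 1)) (y powr (a - 1)) * exp (- y) \<le> gamma_integrand a t"
proof -
  have "min (m powr (a - 1)) (y powr (a - 1)) \<le> t powr (a - 1)"
  proof (cases "a \<ge> 1")
    case True
    then have "m powr (a - 1) \<le> t powr (a - 1)"
      using assms by (intro powr_mono2) auto
    then show ?thesis by linarith
  next
    case False
    then have "y powr (a - 1) \<le> t powr (a - 1)"
      using assms by (intro powr_mono2') auto
    then show ?thesis by linarith
  qed
  moreover have "exp (- y) \<le> exp (- t)"
    using assms by simp
  ultimately show ?thesis
    unfolding gamma_integrand_def by (intro mult_mono) auto
qed

lemma integral_gamma_integrand_pos:
  assumes "a > 0" "0 \<le> x" "x < y"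
  shows "integral {x..y} (gamma_integrand a) > 0"
proof -
  define m where "m = (x + y) / 2"
  define c where "c = min (m powr (a - 1)) (y powr (a - 1)) * exp (- y)"
  have m: "0 < m" "x < m" "m < y"
    using assms by (auto simp: m_def)
  have int_xy: "gamma_integrand a integrable_on {x..y}"
    using integrable_on_subinterval[OF gamma_integrand_integrable_on[OF assms(1), of y]] assms
    by auto
  have int_xm: "gamma_integrand a integrable_on {x..m}"
    using integrable_on_subinterval[OF int_xy] m by auto
  have int_my: "gamma_integrand a integrable_on {m..y}"
    using integrable_on_subinterval[OF int_xy] m by auto
  have split: "integral {x..y} (gamma_integrand a)
                 = integral {x..m} (gamma_integrand a) + integral {m..y} (gamma_integrand a)"
    using Henstock_Kurzweil_Integration.integral_combine[OF _ _ int_xy, of m] m by auto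
  have "integral {x..m} (gamma_integrand a) \<ge> 0"
    using integral_nonneg[OF int_xm] gamma_integrand_nonneg by auto
  moreover have "integral {m..y} (gamma_integrand a) \<ge> integral {m..y} (\<lambda>_. c)"
    using gamma_integrand_lower_bound[OF m(1)] unfolding c_def
    by (intro integral_le[OF integrable_const_ivl int_my]) auto
  moreover have "integral {m..y} (\<lambda>_. c) > 0"
    using m by (simp add: c_def)
  ultimately show ?thesis
    using split by linarith
qed

lemma integral_gamma_integrand_strict_mono:
  assumes "a > 0" "0 \<le> x" "x < y"
  shows "integral {0..x} (gamma_integrand a) < integral {0..y} (gamma_integrand a)"
proof -
  have "integral {0..y} (gamma_integrand a)
          = integral {0..x} (gamma_integrand a) + integral {x..y} (gamma_integrand a)"
    using Henstock_Kurzweil_Integration.integral_combine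
        [OF _ _ gamma_integrand_integrable_on[OF assms(1), of y], of x] assms
    by auto
  with integral_gamma_integrand_pos[OF assms] show ?thesis
    by linarith
qed

lemma integral_gamma_integrand_tendsto_Gamma:
  assumes "a > 0"
  shows "((\<lambda>x. integral {0..x} (gamma_integrand a)) \<longlongrightarrow> Gamma a) at_top"
proof -
  have abs_int: "gamma_integrand a absolutely_integrable_on {0..}"
    using gamma_integrand_has_integral[OF assms] gamma_integrand_nonneg
    by (intro nonnegative_absolutely_integrable_1) (auto simp: integrable_on_def)
  have "set_lebesgue_integral lebesgue {0..} (gamma_integrand a) = Gamma a"
    using set_lebesgue_integral_eq_integral(2)[OF abs_int]
      integral_unique[OF gamma_integrand_has_integral[OF assms]]
    by simp
  moreover have "set_lebesgue_integral lebesgue {0..x} (gamma_integrand a)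
                   = integral {0..x} (gamma_integrand a)" for x
    by (rule set_lebesgue_integral_eq_integral(2), rule set_integrable_subset[OF abs_int]) auto
  moreover have "((\<lambda>x. set_lebesgue_integral lebesgue {0..x} (gamma_integrand a))
                   \<longlongrightarrow> set_lebesgue_integral lebesgue {0..} (gamma_integrand a)) at_top"
    by (rule tendsto_set_lebesgue_integral_at_top[OF _ abs_int]) auto
  ultimately show ?thesis
    by simp
qed

lemma reg_lower_gamma_le_iff:
  assumes "a > 0" "0 \<le> x" "0 \<le> y"
  shows "reg_lower_gamma a x \<le> reg_lower_gamma a y \<longleftrightarrow> x \<le> y"
proof -
  have "integral {0..x} (gamma_integrand a) \<le> integral {0..y} (gamma_integrand a) \<longleftrightarrow> x \<le> y"
    using integral_gamma_integrand_strict_mono[OF assms(1)] assms(2,3)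
    by (cases x y rule: linorder_cases) fastforce+
  then show ?thesis
    using Gamma_real_pos[OF assms(1)] by (simp add: reg_lower_gamma_eq_integral divide_le_cancel)
qed

lemma reg_lower_gamma_attains:
  assumes "a > 0" "0 < q" "q < 1"
  obtains x where "0 \<le> x" "reg_lower_gamma a x = q"
proof -
  have Gamma_pos: "Gamma a > 0"
    using Gamma_real_pos[OF assms(1)] .
  have "\<forall>\<^sub>F x in at_top. integral {0..x} (gamma_integrand a) > q * Gamma a"
    using order_tendstoD(1)[OF integral_gamma_integrand_tendsto_Gamma[OF assms(1)]]
      Gamma_pos assms(3) by simp
  then obtain M where M: "M \<ge> 0" "integral {0..M} (gamma_integrand a) > q * Gamma a"
    unfolding eventually_at_top_linorder by (metis max.cobounded1 max.cobounded2)
  then have "\<exists>x. 0 \<le> x \<and> x \<le> M \<and> integral {0..x} (gamma_integrand a) = q * Gamma a"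
    using IVT'[of "\<lambda>x. integral {0..x} (gamma_integrand a)" 0 "q * Gamma a" M]
      indefinite_integral_continuous_1[OF gamma_integrand_integrable_on[OF assms(1) M(1)]]
      Gamma_pos assms(2)
    by auto
  then show ?thesis
    using that Gamma_pos by (auto simp: reg_lower_gamma_eq_integral)
qed

lemma inv_reg_lower_gamma:
  assumes "a > 0" "0 < q" "q < 1"
  shows "0 \<le> inv_reg_lower_gamma q a" and "reg_lower_gamma a (inv_reg_lower_gamma q a) = q"
proof -
  obtain x where x: "0 \<le> x" "reg_lower_gamma a x = q"
    using reg_lower_gamma_attains[OF assms] .
  have "inv_reg_lower_gamma q a = x"
    unfolding inv_reg_lower_gamma_def
  proof (rule the_equality)
    fix z
    assume "0 \<le> z \<and> reg_lower_gamma a z = q"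
    then show "z = x"
      using reg_lower_gamma_le_iff[OF assms(1), of z x] reg_lower_gamma_le_iff[OF assms(1), of x z] x
      by auto
  qed (use x in auto)
  with x show "0 \<le> inv_reg_lower_gamma q a" "reg_lower_gamma a (inv_reg_lower_gamma q a) = q"
    by simp_all
qed

theorem mainTheorem2:
  fixes \<sigma>2 P_tran \<theta>I \<rho>_cont \<rho>_out N \<gamma> a1 b1 Pstar :: real
  assumes "\<sigma>2 > 0" and "P_tran > 0" and "\<theta>I > 0" and "\<rho>_cont > 0"
    and "0 < \<rho>_out" and "\<rho>_out < 1" and "N > 0" and "\<gamma> \<ge> 0"
    and a1_def: "a1 = N * (1 + \<gamma>)^2 / (2 + 4 * \<gamma>)"
    and b1_def: "b1 = \<sigma>2 * (2 + 4 * \<gamma>) / (N * (1 + \<gamma>))"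
    and pos: "b1 * inv_reg_lower_gamma (1 - \<rho>_out) a1 > \<sigma>2"
    and Pstar_def: "Pstar = \<theta>I * P_tran / (b1 * inv_reg_lower_gamma (1 - \<rho>_out) a1 - \<sigma>2)"
  shows "Pstar \<le> \<rho>_cont \<longleftrightarrow>
         \<rho>_out \<le> 1 - reg_lower_gamma a1 ((1 / b1) * (\<theta>I * P_tran / \<rho>_cont + \<sigma>2))"
proof -
  have a1: "a1 > 0" and b1: "b1 > 0"
    using assms by (simp_all add: a1_def b1_def)
  define x0 where "x0 = inv_reg_lower_gamma (1 - \<rho>_out) a1"
  define z where "z = (1 / b1) * (\<theta>I * P_tran / \<rho>_cont + \<sigma>2)"
  have x0: "0 \<le> x0" "reg_lower_gamma a1 x0 = 1 - \<rho>_out"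
    using inv_reg_lower_gamma[OF a1, of "1 - \<rho>_out"] assms by (simp_all add: x0_def)
  have "z \<ge> 0"
    using assms b1 by (simp add: z_def)
  have "b1 * x0 - \<sigma>2 > 0"
    using pos by (simp add: x0_def)
  then have "Pstar \<le> \<rho>_cont \<longleftrightarrow> \<theta>I * P_tran \<le> \<rho>_cont * (b1 * x0 - \<sigma>2)"
    by (simp add: Pstar_def x0_def[symmetric] divide_le_eq mult.commute)
  also have "\<dots> \<longleftrightarrow> \<theta>I * P_tran / \<rho>_cont + \<sigma>2 \<le> b1 * x0"
    using \<open>\<rho>_cont > 0\<close> by (simp add: pos_divide_le_eq mult.commute flip: le_diff_eq)
  also have "\<dots> \<longleftrightarrow> z \<le> x0"
    using b1 by (simp add: z_def field_simps)
  also have "\<dots> \<longleftrightarrow> reg_lower_gamma a1 z \<le> 1 - \<rho>_out"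
    using reg_lower_gamma_le_iff[OF a1 \<open>z \<ge> 0\<close> x0(1)] x0(2) by simp
  finally show ?thesis
    by (simp add: z_def) linarith
qed

end
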